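(* For any real numbers $0<\gamma\le L$ and any integer $n\ge 1$, there exist a domain $\mathcal{X}\times\mathcal{Y}$, a distribution $P$ supported on a set $\mathcal{Z}\subset\mathcal{X}\times\mathcal{Y}$, a loss function $\ell:\mathcal{Y}\times\mathcal{Y}\to[0,L]$ (i.e. non-negative and $L$-bounded), and a uniformly $\gamma$-stable learning algorithm $\mathcal{A}:\mathcal{Z}^n\to\mathcal{Y}^{\mathcal{X}}$, such that if $\mathcal{S}$ is a training set of $n$ i.i.d. samples from $P$, then with probability at least $3/64$ over the draw of $\mathcal{S}$, \[ R_{\rm pop}(\mathcal{A}_\mathcal{S})-R_{\rm emp}(\mathcal{A}_\mathcal{S})\ge \frac{\gamma}{4}+\frac{L}{32\sqrt{n}}. \]
   Context: A learning algorithm $\mathcal{A}$ is a (deterministic) map sending a training set $\mathcal{S}=\{(x_1,y_1),\ldots,(x_n,y_n)\}$ to a function $\mathcal{A}_\mathcal{S}:\mathcal{X}\to\mathcal{Y}$. For a non-negative loss $\ell:\mathcal{Y}\times\mathcal{Y}\to\mathbb{R}$ and data distribution $P$ on $\mathcal{X}\times\mathcal{Y}$, the population risk is $R_{\rm pop}(\mathcal{A}_\mathcal{S})=\mathbb{E}_{(x,y)\sim P}[\ell(\mathcal{A}_\mathcal{S}(x),y)]$ and the empirical risk is $R_{\rm emp}(\mathcal{A}_\mathcal{S})=\frac1n\sum_{i=1}^n \ell(\mathcal{A}_\mathcal{S}(x_i),y_i)$. The algorithm $\mathcal{A}$ is uniformly $\gamma$-stable if for every training set $\mathcal{S}=\{(x_1,y_1),\ldots,(x_n,y_n)\}$,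 every index $i$, every training set $\mathcal{S}^i$ obtained from $\mathcal{S}$ by replacing $(x_i,y_i)$ with an arbitrary $(x_i',y_i')$, and every $(x,y)\in\mathcal{X}\times\mathcal{Y}$, one has $|\ell(\mathcal{A}_\mathcal{S}(x),y)-\ell(\mathcal{A}_{\mathcal{S}^i}(x),y)|\le\gamma$. *)

theory Defs
  imports "HOL-Probability.Probability"
begin

text \<open>Training sets of size n are functions S :: nat => 'x * 'y, of which only
  the values S 0, ..., S (n-1) are relevant.\<close>

definition pop_risk ::
  "('y \<Rightarrow> 'y \<Rightarrow> real) \<Rightarrow> ('x \<times> 'y) pmf \<Rightarrow> ('x \<Rightarrow> 'y) \<Rightarrow> real" where
  "pop_risk loss P h = measure_pmf.expectation P (\<lambda>(x, y). loss (h x) y)"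

definition emp_risk ::
  "('y \<Rightarrow> 'y \<Rightarrow> real) \<Rightarrow> nat \<Rightarrow> (nat \<Rightarrow> 'x \<times> 'y) \<Rightarrow> ('x \<Rightarrow> 'y) \<Rightarrow> real" where
  "emp_risk loss n S h = (1 / real n) * (\<Sum>i<n. loss (h (fst (S i))) (snd (S i)))"

definition uniformly_stable ::
  "('y \<Rightarrow> 'y \<Rightarrow> real) \<Rightarrow> ('x \<times> 'y) set \<Rightarrow> nat \<Rightarrow> ((nat \<Rightarrow> 'x \<times> 'y) \<Rightarrow> 'x \<Rightarrow> 'y) \<Rightarrow> real \<Rightarrow> bool" where
  "uniformly_stable loss Z n A \<gamma> \<longleftrightarrow>
     (\<forall>S. (\<forall>j<n. S j \<in> Z) \<longrightarrow>
       (\<forall>i<n. \<forall>z'\<in>Z. \<forall>x y.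
          \<bar>loss (A S x) y - loss (A (S(i := z')) x) y\<bar> \<le> \<gamma>))"

definition iid_sample :: "nat \<Rightarrow> 'z pmf \<Rightarrow> (nat \<Rightarrow> 'z) pmf" where
  "iid_sample n P = Pi_pmf {..<n} undefined (\<lambda>_. P)"

end

theory Submission
  imports Defs
begin

text \<open>
  Take the points uniform on \<open>{0, ..., 4n-1}\<close> with independent fair-coin labels in
  \<open>{0, 1}\<close>, and let the algorithm predict 1 exactly on the training points. The loss
  charges \<open>\<gamma>\<close> for every prediction other than 1 and, independently of the prediction,
  \<open>L - \<gamma>\<close> for the label 1. Changing one training point changes the predictor at two
  points only, and only through the \<open>\<gamma>\<close>-part, so the algorithm is uniformly
  \<open>\<gamma>\<close>-stable. The empirical risk sees only the label part, \<open>(L - \<gamma>) K / n\<close> with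
  \<open>K ~ Bin(n, 1/2)\<close> the number of ones in the sample, while the population risk is at
  least \<open>3\<gamma>/4 + (L - \<gamma>)/2\<close> since at most a quarter of the points are memorized.
  The gap is therefore large as soon as \<open>K \<le> n/2 - \<surd>n/32\<close>. That this event has
  probability at least \<open>3/64\<close> follows from the symmetry of \<open>Bin(n, 1/2)\<close> and the bound
  \<open>binom(n, k) \<le> 2^n / \<surd>(n+1)\<close>, which keeps the mass of any window of width
  \<open>\<surd>n/16\<close> around \<open>n/2\<close> small.
\<close>

lemma square_le_from_ratio:
  fixes c d k r p q K B :: nat
  assumes ratio: "d * k = r * c" and coeffs: "r^2 * q \<le> K * k^2 * p"
    and bound: "c^2 * p \<le> B" and "0 < k"
  shows "d^2 * q \<le> K * B"
proof -
  have "k^2 * (d^2 * q) = c^2 * (r^2 * q)"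
    using arg_cong[OF ratio, of "\<lambda>x. x^2 * q"] by (simp add: power_mult_distrib mult_ac)
  also have "\<dots> \<le> c^2 * (K * k^2 * p)" using coeffs by (rule mult_left_mono) simp
  also have "\<dots> = k^2 * (K * (c^2 * p))" by (simp add: mult_ac)
  also have "\<dots> \<le> k^2 * (K * B)" using bound by simp
  finally show ?thesis using \<open>0 < k\<close> by simp
qed

lemma central_binomial_odd_step: "(Suc (2*m) choose m) * Suc m = Suc (2*m) * (2*m choose m)"
proof -
  have "Suc (2*m) choose m = Suc (2*m) choose Suc m"
    by (subst binomial_symmetric) auto
  then show ?thesis using Suc_times_binomial_eq[of "2*m" m] by simp
qed

lemma central_binomial_even_step: "(2 * Suc m choose Suc m) * Suc m = 2 * Suc (2*m) * (2*m choose m)"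
proof -
  have "(2 * Suc m choose Suc m) * Suc m = 2 * Suc m * (Suc (2*m) choose m)"
    using Suc_times_binomial_eq[of "Suc (2*m)" m] by simp
  then have "(2 * Suc m choose Suc m) * Suc m * Suc m = 2 * Suc m * ((Suc (2*m) choose m) * Suc m)"
    by (metis mult.assoc)
  also have "\<dots> = 2 * Suc m * (Suc (2*m) * (2*m choose m))"
    by (simp only: central_binomial_odd_step)
  finally have "((2 * Suc m choose Suc m) * Suc m) * Suc m = (2 * Suc (2*m) * (2*m choose m)) * Suc m"
    by (simp only: mult_ac)
  then show ?thesis by (simp only: mult_right_cancel)
qed

lemma central_binomial_even_sq_le: "(2*m choose m)^2 * (2*m + 1) \<le> 16^m"
proof (induction m)
  case (Suc m)
  have "(2 * Suc (2*m))^2 * (2 * Suc m + 1) \<le> 16 * (Suc m)^2 * (2*m + 1)"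
    by (simp add: power2_eq_square algebra_simps)
  from square_le_from_ratio[OF central_binomial_even_step this Suc.IH] show ?case by simp
qed simp

lemma central_binomial_sq_le: "(n choose (n div 2))^2 * (n + 1) \<le> 4^n"
proof (cases "even n")
  case True
  then obtain m where n: "n = 2*m" by blast
  then show ?thesis using central_binomial_even_sq_le[of m] by (simp add: power_mult)
next
  case False
  then obtain m where n: "n = 2*m + 1" by (rule oddE)
  have "(Suc (2*m))^2 * (2 * m + 2) \<le> 4 * (Suc m)^2 * (2*m + 1)"
    by (simp add: power2_eq_square algebra_simps)
  from square_le_from_ratio[OF central_binomial_odd_step this central_binomial_even_sq_le]
  show ?thesis using n by (simp add: power_mult)
qed

lemma binomial_le_two_pow_div_sqrt: "real (n choose k) / 2^n \<le> 1 / sqrt (real n + 1)"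
proof -
  have "real ((n choose (n div 2))^2 * (n + 1)) \<le> real (4^n)"
    using central_binomial_sq_le of_nat_le_iff by blast
  then have "real (n choose (n div 2))^2 * (real n + 1) \<le> (2^n)^2"
    by (simp add: power2_eq_square algebra_simps flip: power_mult_distrib)
  then have "real (n choose (n div 2)) * sqrt (real n + 1) \<le> 2^n"
    by (metis real_sqrt_le_mono real_sqrt_mult real_sqrt_abs abs_of_nonneg of_nat_0_le_iff zero_le_power zero_le_numeral)
  moreover have "real (n choose k) * sqrt (real n + 1) \<le> real (n choose (n div 2)) * sqrt (real n + 1)"
    by (intro mult_right_mono) (simp_all add: binomial_maximum)
  ultimately have "real (n choose k) * sqrt (real n + 1) \<le> 2^n" by linarith
  then show ?thesis by (simp add: field_simps)
qed

lemma card_nat_near_le: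
  fixes x w :: real
  assumes "finite A" and "0 \<le> w" and near: "\<And>k. k \<in> A \<Longrightarrow> \<bar>real k - x\<bar> < w"
  shows "real (card A) \<le> 2*w + 1"
proof (cases "A = {}")
  case False
  define a where "a = nat \<lceil>x - w\<rceil>"
  define b where "b = nat \<lfloor>x + w\<rfloor>"
  have sub: "A \<subseteq> {a..b}"
    using near by (force simp: a_def b_def nat_le_iff le_nat_iff ceiling_le_iff le_floor_iff)
  then have "a \<le> b" using False by auto
  obtain k where "k \<in> A" using False by blast
  then have "0 \<le> x + w" using near[of k] by linarith
  then have "real b \<le> x + w" unfolding b_def by linarith
  moreover have "x - w \<le> real a" unfolding a_def by linarith
  moreover have "card A \<le> card {a..b}" using sub by (intro card_mono) auto
  ultimately show ?thesis using \<open>a \<le> b\<close> by (simp add: of_nat_diff)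
qed (use assms in simp)

lemma prob_binomial_half:
  "measure_pmf.prob (binomial_pmf n (1/2)) A = (\<Sum>k\<in>A \<inter> {..n}. real (n choose k)) / 2^n"
proof -
  have "measure_pmf.prob (binomial_pmf n (1/2)) A = measure_pmf.prob (binomial_pmf n (1/2)) (A \<inter> {..n})"
    using measure_Int_set_pmf[of "binomial_pmf n (1/2)" A] by simp
  also have "\<dots> = (\<Sum>k\<in>A \<inter> {..n}. pmf (binomial_pmf n (1/2)) k)"
    by (rule measure_measure_pmf_finite) simp
  also have "\<dots> = (\<Sum>k\<in>A \<inter> {..n}. real (n choose k) / 2^n)"
  proof (intro sum.cong refl)
    fix k assume "k \<in> A \<inter> {..n}"
    then have "(1/2::real)^k * (1/2)^(n - k) = (1/2)^n" by (simp flip: power_add)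
    then show "pmf (binomial_pmf n (1/2)) k = real (n choose k) / 2^n"
      by (simp add: mult.assoc power_divide)
  qed
  finally show ?thesis by (simp add: sum_divide_distrib)
qed

lemma sum_binomial_reflect:
  assumes "A \<subseteq> {..n}"
  shows "(\<Sum>k\<in>(\<lambda>k. n - k) ` A. real (n choose k)) = (\<Sum>k\<in>A. real (n choose k))"
proof -
  have "inj_on (\<lambda>k. n - k) A"
    using assms by (intro inj_onI) (metis atMost_iff diff_diff_cancel subsetD)
  then show ?thesis using assms by (simp add: sum.reindex binomial_symmetric[symmetric] subset_iff)
qed

lemma binomial_half_lower_tail_ge:
  assumes "0 < w"
  shows "(1 - (2*w + 1) / sqrt (real n + 1)) / 2
           \<le> measure_pmf.prob (binomial_pmf n (1/2)) {k. real k \<le> real n / 2 - w}"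
proof -
  let ?c = "\<lambda>k. real (n choose k)"
  define q where "q = (2*w + 1) / sqrt (real n + 1)"
  define Lo where "Lo = {k. real k \<le> real n / 2 - w} \<inter> {..n}"
  define Mi where "Mi = {k. \<bar>real k - real n / 2\<bar> < w} \<inter> {..n}"
  define Hi where "Hi = {k. real n / 2 + w \<le> real k} \<inter> {..n}"
  have "Hi = (\<lambda>k. n - k) ` Lo"
  proof (intro equalityI subsetI)
    fix k assume "k \<in> Hi"
    then have "n - k \<in> Lo" and "k = n - (n - k)" by (auto simp: Hi_def Lo_def of_nat_diff)
    then show "k \<in> (\<lambda>k. n - k) ` Lo" by blast
  qed (auto simp: Hi_def Lo_def of_nat_diff)
  then have "sum ?c Hi = sum ?c Lo" by (simp add: sum_binomial_reflect Lo_def)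
  moreover have "sum ?c Lo + sum ?c Mi + sum ?c Hi = 2^n"
  proof -
    have "{..n} = Lo \<union> Mi \<union> Hi" and "Lo \<inter> Mi = {}" and "(Lo \<union> Mi) \<inter> Hi = {}"
      using assms by (auto simp: Lo_def Mi_def Hi_def)
    moreover have "finite Lo" "finite Mi" "finite Hi" by (simp_all add: Lo_def Mi_def Hi_def)
    ultimately have "sum ?c {..n} = sum ?c Lo + sum ?c Mi + sum ?c Hi"
      by (simp add: sum.union_disjoint)
    then show ?thesis by (simp flip: of_nat_sum add: choose_row_sum)
  qed
  moreover have "sum ?c Mi \<le> 2^n * q"
  proof -
    have "sum ?c Mi \<le> real (card Mi) * (2^n / sqrt (real n + 1))"
      using sum_bounded_above[of Mi ?c "2^n / sqrt (real n + 1)"]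
        binomial_le_two_pow_div_sqrt[of n] by (simp add: field_simps)
    also have "\<dots> \<le> (2*w + 1) * (2^n / sqrt (real n + 1))"
      using assms by (intro mult_right_mono card_nat_near_le) (auto simp: Mi_def)
    finally show ?thesis by (simp add: q_def field_simps)
  qed
  ultimately have "2^n * (1 - q) \<le> 2 * sum ?c Lo" by (simp add: algebra_simps)
  then have "(1 - q) / 2 \<le> sum ?c Lo / 2^n" by (simp add: field_simps)
  then show ?thesis by (simp add: prob_binomial_half Lo_def q_def)
qed

lemma binomial_half_lower_tail_ge_3_64:
  assumes "1 \<le> n"
  shows "3/64 \<le> measure_pmf.prob (binomial_pmf n (1/2)) {k. real k \<le> real n / 2 - sqrt (real n) / 32}"
proof -
  define q where "q = (2 * (sqrt (real n) / 32) + 1) / sqrt (real n + 1)"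
  define r where "r = sqrt (real n) / sqrt (real n + 1)"
  define t where "t = 1 / sqrt (real n + 1)"
  have "r \<le> 1" by (simp add: r_def divide_le_eq_1)
  moreover have "4/3 \<le> sqrt (real n + 1)"
    using assms by (intro real_le_rsqrt) (simp add: power2_eq_square)
  then have "t \<le> 3/4" by (simp add: t_def field_simps)
  moreover have "r / 16 + t = q" by (simp add: q_def r_def t_def field_simps)
  ultimately have "3/64 \<le> (1 - q) / 2" by simp
  also have "\<dots> \<le> measure_pmf.prob (binomial_pmf n (1/2)) {k. real k \<le> real n / 2 - sqrt (real n) / 32}"
    unfolding q_def using assms by (intro binomial_half_lower_tail_ge) simp
  finally show ?thesis .
qed

definition memorizer :: "nat \<Rightarrow> (nat \<Rightarrow> real \<times> real) \<Rightarrow> real \<Rightarrow> real" where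
  "memorizer n S x = (if \<exists>i<n. fst (S i) = x then 1 else 0)"

definition split_loss :: "real \<Rightarrow> real \<Rightarrow> real \<Rightarrow> real \<Rightarrow> real" where
  "split_loss \<gamma> L a b = (if a = 1 then 0 else \<gamma>) + (if b = 1 then L - \<gamma> else 0)"

definition coin_labelled_pmf :: "nat \<Rightarrow> (real \<times> real) pmf" where
  "coin_labelled_pmf N =
     map_pmf (\<lambda>(m, b). (real m, of_bool b)) (pair_pmf (pmf_of_set {..<N}) (bernoulli_pmf (1/2)))"

lemma split_loss_bounds:
  assumes "0 \<le> \<gamma>" and "\<gamma> \<le> L"
  shows "0 \<le> split_loss \<gamma> L a b \<and> split_loss \<gamma> L a b \<le> L"
  using assms by (simp add: split_loss_def)

lemma uniformly_stable_memorizer: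
  assumes "0 \<le> \<gamma>"
  shows "uniformly_stable (split_loss \<gamma> L) Z n (memorizer n) \<gamma>"
  using assms by (simp add: uniformly_stable_def split_loss_def)

lemma emp_risk_memorizer:
  "emp_risk (split_loss \<gamma> L) n S (memorizer n S)
     = (L - \<gamma>) * real (card {i\<in>{..<n}. snd (S i) = 1}) / real n"
proof -
  have "(\<Sum>i<n. split_loss \<gamma> L (memorizer n S (fst (S i))) (snd (S i)))
          = (\<Sum>i<n. if snd (S i) = 1 then L - \<gamma> else 0)"
    by (intro sum.cong) (auto simp: split_loss_def memorizer_def)
  also have "\<dots> = (L - \<gamma>) * real (card {i\<in>{..<n}. snd (S i) = 1})"
    by (simp add: sum.If_cases Int_def)
  finally show ?thesis by (simp add: emp_risk_def)
qed

lemma card_nat_hit_le: "card {m::nat. \<exists>i<n. x i = real m} \<le> n"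
proof -
  have "card {m::nat. \<exists>i<n. x i = real m} \<le> card (x ` {..<n})"
    by (intro card_inj_on_le[of real]) (force simp: image_iff)+
  also have "\<dots> \<le> n" using card_image_le[of "{..<n}" x] by simp
  finally show ?thesis .
qed

lemma pop_risk_memorizer_ge:
  assumes "0 \<le> \<gamma>" and "n \<le> N" and "0 < N"
  shows "\<gamma> * (1 - real n / real N) + (L - \<gamma>) / 2
           \<le> pop_risk (split_loss \<gamma> L) (coin_labelled_pmf N) (memorizer n S)"
proof -
  define T where "T = {m::nat. \<exists>i<n. fst (S i) = real m}"
  define miss :: "nat \<Rightarrow> real" where "miss m = (if m \<in> T then 0 else \<gamma>)" for m
  define label :: "bool \<Rightarrow> real" where "label b = (if b then L - \<gamma> else 0)" for b
  let ?U = "pmf_of_set {..<N}" and ?B = "bernoulli_pmf (1/2)"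
  have U: "set_pmf ?U = {..<N}" using assms by (subst set_pmf_of_set) auto
  have "pop_risk (split_loss \<gamma> L) (coin_labelled_pmf N) (memorizer n S)
          = measure_pmf.expectation (pair_pmf ?U ?B) (\<lambda>z. miss (fst z) + label (snd z))"
    unfolding pop_risk_def coin_labelled_pmf_def
    by (auto simp: split_loss_def memorizer_def miss_def label_def T_def case_prod_unfold
        intro!: Bochner_Integration.integral_cong)
  also have "\<dots> = measure_pmf.expectation ?U miss + measure_pmf.expectation ?B label"
  proof -
    have "finite (set_pmf (pair_pmf ?U ?B))" using U by simp
    then have "measure_pmf.expectation (pair_pmf ?U ?B) (\<lambda>z. miss (fst z) + label (snd z))
        = measure_pmf.expectation (pair_pmf ?U ?B) (\<lambda>z. miss (fst z))
          + measure_pmf.expectation (pair_pmf ?U ?B) (\<lambda>z. label (snd z))"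
      by (intro Bochner_Integration.integral_add integrable_measure_pmf_finite)
    also have "measure_pmf.expectation (pair_pmf ?U ?B) (\<lambda>z. miss (fst z)) = measure_pmf.expectation ?U miss"
      using integral_map_pmf[of fst "pair_pmf ?U ?B" miss] by (simp add: map_fst_pair_pmf)
    also have "measure_pmf.expectation (pair_pmf ?U ?B) (\<lambda>z. label (snd z)) = measure_pmf.expectation ?B label"
      using integral_map_pmf[of snd "pair_pmf ?U ?B" label] by (simp add: map_snd_pair_pmf)
    finally show ?thesis .
  qed
  also have "measure_pmf.expectation ?B label = (L - \<gamma>) / 2" by (simp add: label_def)
  also have "measure_pmf.expectation ?U miss = \<gamma> * real (card ({..<N} - T)) / real N"
  proof -
    have "{..<N} \<noteq> {}" using assms by auto
    then show ?thesis by (simp add: integral_pmf_of_set miss_def sum.If_cases Diff_eq)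
  qed
  finally have pop: "pop_risk (split_loss \<gamma> L) (coin_labelled_pmf N) (memorizer n S)
                       = \<gamma> * real (card ({..<N} - T)) / real N + (L - \<gamma>) / 2" .
  have "\<gamma> * (1 - real n / real N) \<le> \<gamma> * real (card ({..<N} - T)) / real N"
  proof -
    have "real ` T \<subseteq> (\<lambda>i. fst (S i)) ` {..<n}" by (force simp: T_def image_iff)
    then have "finite T" by (meson finite_imageD finite_imageI finite_lessThan finite_subset inj_of_nat inj_on_subset subset_UNIV)
    then have "N - n \<le> card ({..<N} - T)"
      using diff_card_le_card_Diff[of T "{..<N}"] card_nat_hit_le[of n "\<lambda>i. fst (S i)"]
      by (simp add: T_def)
    then have "real N - real n \<le> real (card ({..<N} - T))"
      using \<open>n \<le> N\<close> by (metis of_nat_diff of_nat_le_iff)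
    then have "\<gamma> * (real N - real n) / real N \<le> \<gamma> * real (card ({..<N} - T)) / real N"
      using assms by (intro divide_right_mono mult_left_mono) auto
    moreover have "\<gamma> * (1 - real n / real N) = \<gamma> * (real N - real n) / real N"
      using assms by (simp add: field_simps)
    ultimately show ?thesis by simp
  qed
  then show ?thesis unfolding pop by simp
qed

lemma map_pmf_label_coin_labelled:
  "map_pmf (\<lambda>z. snd z = 1) (coin_labelled_pmf N) = bernoulli_pmf (1/2)"
proof -
  have "(\<lambda>z. snd z = 1) \<circ> (\<lambda>(m::nat, b). (real m, of_bool b :: real)) = snd"
    by (auto simp: fun_eq_iff)
  then show ?thesis by (simp add: coin_labelled_pmf_def pmf.map_comp map_snd_pair_pmf)
qed

lemma map_pmf_count_iid_sample:
  assumes "map_pmf Q P = bernoulli_pmf p" and "0 \<le> p" and "p \<le> 1"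
  shows "map_pmf (\<lambda>S. card {i\<in>{..<n}. Q (S i)}) (iid_sample n P) = binomial_pmf n p"
proof -
  have "map_pmf (\<lambda>S. card {i\<in>{..<n}. Q (S i)}) (iid_sample n P)
          = map_pmf (\<lambda>f. card {i\<in>{..<n}. f i}) (map_pmf (\<lambda>S. Q \<circ> S) (iid_sample n P))"
    by (simp add: pmf.map_comp comp_def)
  also have "map_pmf (\<lambda>S. Q \<circ> S) (iid_sample n P) = Pi_pmf {..<n} (Q undefined) (\<lambda>_. map_pmf Q P)"
    unfolding iid_sample_def by (rule Pi_pmf_map[symmetric]) auto
  also have "map_pmf (\<lambda>f. card {i\<in>{..<n}. f i}) (Pi_pmf {..<n} (Q undefined) (\<lambda>_. map_pmf Q P))
               = binomial_pmf n p"
    unfolding assms(1) by (rule binomial_pmf_altdef'[symmetric]) (use assms in auto)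
  finally show ?thesis .
qed

lemma risk_gap_memorizer_ge:
  assumes "0 \<le> \<gamma>" and "\<gamma> \<le> L" and "1 \<le> n"
    and few_ones: "real (card {i\<in>{..<n}. snd (S i) = 1}) \<le> real n / 2 - sqrt (real n) / 32"
  shows "\<gamma> / 4 + L / (32 * sqrt (real n))
           \<le> pop_risk (split_loss \<gamma> L) (coin_labelled_pmf (4*n)) (memorizer n S)
             - emp_risk (split_loss \<gamma> L) n S (memorizer n S)"
proof -
  define s where "s = sqrt (real n)"
  have "1 \<le> s" using assms by (simp add: s_def)
  have n_eq: "real n = s * s" by (simp add: s_def)
  have "emp_risk (split_loss \<gamma> L) n S (memorizer n S) \<le> (L - \<gamma>) * (real n / 2 - s / 32) / real n"
    unfolding emp_risk_memorizer s_def
    using few_ones assms by (intro divide_right_mono mult_left_mono) auto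
  also have "\<dots> = (L - \<gamma>) / 2 - (L - \<gamma>) / (32 * s)"
    using \<open>1 \<le> s\<close> unfolding n_eq by (simp add: field_simps)
  finally have emp: "emp_risk (split_loss \<gamma> L) n S (memorizer n S) \<le> (L - \<gamma>) / 2 - (L - \<gamma>) / (32 * s)" .
  have quarter: "real n / real (4*n) = 1/4" using assms by simp
  have "\<gamma> * (1 - real n / real (4*n)) + (L - \<gamma>) / 2
          \<le> pop_risk (split_loss \<gamma> L) (coin_labelled_pmf (4*n)) (memorizer n S)"
    using assms by (intro pop_risk_memorizer_ge) auto
  then have "3 * \<gamma> / 4 + (L - \<gamma>) / 2
          \<le> pop_risk (split_loss \<gamma> L) (coin_labelled_pmf (4*n)) (memorizer n S)"
    unfolding quarter by (simp add: field_simps)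
  moreover have "\<gamma> / (32 * s) \<le> \<gamma> / 2" using \<open>1 \<le> s\<close> assms by (intro divide_left_mono) auto
  moreover have "L / (32 * s) = (L - \<gamma>) / (32 * s) + \<gamma> / (32 * s)"
    by (simp flip: add_divide_distrib)
  ultimately show ?thesis using emp unfolding s_def[symmetric] by linarith
qed

theorem theorem2:
  fixes \<gamma> L :: real and n :: nat
  assumes "0 < \<gamma>" and "\<gamma> \<le> L" and "n \<ge> 1"
  shows "\<exists>(Z :: (real \<times> real) set) (P :: (real \<times> real) pmf)
            (loss :: real \<Rightarrow> real \<Rightarrow> real)
            (A :: (nat \<Rightarrow> real \<times> real) \<Rightarrow> real \<Rightarrow> real).
           set_pmf P \<subseteq> Z \<and>
           (\<forall>a b. 0 \<le> loss a b \<and> loss a b \<le> L) \<and>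
           uniformly_stable loss Z n A \<gamma> \<and>
           measure_pmf.prob (iid_sample n P)
             {S. pop_risk loss P (A S) - emp_risk loss n S (A S)
                   \<ge> \<gamma> / 4 + L / (32 * sqrt (real n))} \<ge> 3 / 64"
proof -
  let ?P = "coin_labelled_pmf (4*n)"
  let ?count = "\<lambda>S. card {i\<in>{..<n}. snd (S i) = 1}"
  have "3/64 \<le> measure_pmf.prob (binomial_pmf n (1/2)) {k. real k \<le> real n / 2 - sqrt (real n) / 32}"
    using assms by (intro binomial_half_lower_tail_ge_3_64)
  also have "binomial_pmf n (1/2) = map_pmf ?count (iid_sample n ?P)"
    by (rule map_pmf_count_iid_sample[OF map_pmf_label_coin_labelled, symmetric]) simp_all
  also have "measure_pmf.prob \<dots> {k. real k \<le> real n / 2 - sqrt (real n) / 32}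
      = measure_pmf.prob (iid_sample n ?P) {S. real (?count S) \<le> real n / 2 - sqrt (real n) / 32}"
    by (simp add: vimage_def)
  also have "\<dots> \<le> measure_pmf.prob (iid_sample n ?P)
      {S. pop_risk (split_loss \<gamma> L) ?P (memorizer n S) - emp_risk (split_loss \<gamma> L) n S (memorizer n S)
            \<ge> \<gamma> / 4 + L / (32 * sqrt (real n))}"
    using assms by (intro measure_pmf.finite_measure_mono) (auto intro: risk_gap_memorizer_ge)
  finally show ?thesis
    using assms split_loss_bounds uniformly_stable_memorizer
    by (intro exI[of _ UNIV] exI[of _ ?P] exI[of _ "split_loss \<gamma> L"] exI[of _ "memorizer n"]) auto
qed

end
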